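(* Let $\lambda\in\mathbb{C}\setminus\{\pm\pi i\}$ and let $N_\lambda$ be the Newton map of $F_\lambda(z)=e^{\lambda z}\sin\pi z$. Its exponential projection $g_\lambda$, given by $$g_\lambda(w)=we^{2\pi iM_\lambda(w)},\qquad M_\lambda(w)=-\frac{w-1}{(\lambda+\pi i)w-(\lambda-\pi i)},$$ has a unique essential singularity at $B_\lambda=\frac{\lambda-\pi i}{\lambda+\pi i}$. Moreover: (i) the set of fixed points of $g_\lambda$ consists of $0$ and $\infty$, with multipliers $g_\lambda'(0)=\exp\!\big(\frac{2\pi i}{\pi i-\lambda}\big)$ and $g_\lambda'(\infty)=\exp\!\big(\frac{2\pi i}{\pi i+\lambda}\big)$, and, for $\sigma\in\mathbb{Z}$, the points $w^*_\sigma=\frac{1+(\lambda-\pi i)\sigma}{1+(\lambda+\pi i)\sigma}$, with $g_\lambda'(w^*_\sigma)=1-\big(1+(\lambda-\pi i)\sigma\big)\big(1+(\lambda+\pi i)\sigma\big)$; (ii) the set of singular values of $g_\lambda$ consists of the fixed asymptotic values $0$ and $\infty$, the fixed critical point $w^*_0=1$, and the image of the only free critical point $C_\lambda=B_\lambda^2$.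
   Context: The exponential projection $g_\lambda$ satisfies $g_\lambda(e^{2\pi iz})=e^{2\pi iN_\lambda(z)}$; here $N_\lambda(z)=z+M_\lambda(e^{2\pi iz})$. The multiplier at $\infty$ is the derivative in the local coordinate $1/w$. Singular values are the closure of the set of critical values and asymptotic values (limits of $g_\lambda$ along paths tending to an essential singularity). *)

theory Defs
  imports "HOL-Complex_Analysis.Complex_Analysis"
begin

definition M_lam :: "complex \<Rightarrow> complex \<Rightarrow> complex" where
  "M_lam l w = - (w - 1) / ((l + pi * \<i>) * w - (l - pi * \<i>))"

definition g_lam :: "complex \<Rightarrow> complex \<Rightarrow> complex" where
  "g_lam l w = w * exp (2 * pi * \<i> * M_lam l w)"

definition B_lam :: "complex \<Rightarrow> complex" where
  "B_lam l = (l - pi * \<i>) / (l + pi * \<i>)"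

definition wstar :: "complex \<Rightarrow> int \<Rightarrow> complex" where
  "wstar l s = (1 + (l - pi * \<i>) * of_int s) / (1 + (l + pi * \<i>) * of_int s)"

text \<open>Expression of f in the local coordinate 1/w at infinity (for f with f(infinity) = infinity).\<close>
definition chart_inf :: "(complex \<Rightarrow> complex) \<Rightarrow> complex \<Rightarrow> complex" where
  "chart_inf f z = (if z = 0 then 0 else inverse (f (inverse z)))"

definition critical_values :: "(complex \<Rightarrow> complex) \<Rightarrow> complex set \<Rightarrow> complex set" where
  "critical_values f S = {f w | w. w \<in> S \<and> deriv f w = 0}"

definition asymptotic_value :: "(complex \<Rightarrow> complex) \<Rightarrow> complex \<Rightarrow> complex \<Rightarrow> bool" where
  "asymptotic_value f s a \<longleftrightarrow>
     (\<exists>\<gamma>::real \<Rightarrow> complex. continuous_on {0..<1} \<gamma> \<and> \<gamma> ` {0..<1} \<subseteq> - {s} \<and>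
        (\<gamma> \<longlongrightarrow> s) (at_left 1) \<and> ((f \<circ> \<gamma>) \<longlongrightarrow> a) (at_left 1))"

definition asymptotic_value_inf :: "(complex \<Rightarrow> complex) \<Rightarrow> complex \<Rightarrow> bool" where
  "asymptotic_value_inf f s \<longleftrightarrow>
     (\<exists>\<gamma>::real \<Rightarrow> complex. continuous_on {0..<1} \<gamma> \<and> \<gamma> ` {0..<1} \<subseteq> - {s} \<and>
        (\<gamma> \<longlongrightarrow> s) (at_left 1) \<and> filterlim (f \<circ> \<gamma>) at_infinity (at_left 1))"

text \<open>Singular values (closure in the Riemann sphere of critical and asymptotic values),
  for a map f defined on (C \<union> {infinity}) - {s}, holomorphic on the finite part S,
  fixing infinity.\<close>
definition singular_values_fin :: "(complex \<Rightarrow> complex) \<Rightarrow> complex set \<Rightarrow> complex \<Rightarrow> complex set" where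
  "singular_values_fin f S s = closure (critical_values f S \<union> {a. asymptotic_value f s a})"

definition infinity_singular :: "(complex \<Rightarrow> complex) \<Rightarrow> complex set \<Rightarrow> complex \<Rightarrow> bool" where
  "infinity_singular f S s \<longleftrightarrow>
     deriv (chart_inf f) 0 = 0 \<or> asymptotic_value_inf f s \<or>
     \<not> bounded (critical_values f S \<union> {a. asymptotic_value f s a})"

end

theory Submission
  imports Defs "HOL-Real_Asymp.Real_Asymp"
begin

text \<open>Write \<open>a = \<lambda> + \<pi> i\<close> and \<open>b = \<lambda> - \<pi> i\<close>, so \<open>a - b = 2 \<pi> i\<close>. Partial fractions give
  \<open>g\<^sub>\<lambda>(w) = c w exp (K / (w - B\<^sub>\<lambda>))\<close> with \<open>c = exp (-2 \<pi> i / a)\<close> and \<open>K = -4 \<pi>\<^sup>2 / a\<^sup>2\<close>,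
  and the behaviour at \<open>B\<^sub>\<lambda>\<close> and at \<open>\<infinity>\<close> holds for every map of this shape. Along the rays
  \<open>w = B \<mp> (1 - t) K\<close> the exponent is \<open>\<mp>1 / (1 - t)\<close>, so \<open>0\<close> and \<open>\<infinity>\<close> are asymptotic values and
  \<open>B\<close> is essential. A finite asymptotic value \<open>\<alpha> \<noteq> 0\<close> is impossible: along its path the exponent
  \<open>K / (w - B)\<close> would be a continuous logarithm of a function tending to \<open>\<alpha> / (c B)\<close>, hence
  convergent, whereas it tends to \<open>\<infinity>\<close>. The finite fixed points other than \<open>0\<close> are the solutions of
  \<open>M\<^sub>\<lambda>(w) \<in> \<int>\<close>, i.e. the \<open>w*\<^sub>\<sigma>\<close>, and the critical points are the roots of
  \<open>(a w - b)\<^sup>2 + 4 \<pi>\<^sup>2 w = (a\<^sup>2 w - b\<^sup>2) (w - 1)\<close>.\<close>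

lemma filterlim_at_of_path:
  fixes \<gamma> :: "real \<Rightarrow> 'a::topological_space"
  assumes "\<gamma> ` {0..<1} \<subseteq> - {s}" and "(\<gamma> \<longlongrightarrow> s) (at_left 1)"
  shows "filterlim \<gamma> (at s) (at_left 1)"
  unfolding filterlim_at
proof
  have "eventually (\<lambda>t. t \<in> {0<..<1}) (at_left (1::real))"
    by (rule eventually_at_left_real) simp
  then show "\<forall>\<^sub>F t in at_left 1. \<gamma> t \<in> UNIV \<and> \<gamma> t \<noteq> s"
    by eventually_elim (use assms(1) in auto)
qed (fact assms(2))

lemma essential_singularity_if_asymptotic_values:
  assumes "asymptotic_value f s a" and "asymptotic_value_inf f s"
  shows "\<not> not_essential f s"
proof
  obtain \<gamma> :: "real \<Rightarrow> complex" where \<gamma>: "filterlim \<gamma> (at s) (at_left 1)"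
    and lim_\<gamma>: "((f \<circ> \<gamma>) \<longlongrightarrow> a) (at_left 1)"
    using assms(1) filterlim_at_of_path unfolding asymptotic_value_def by blast
  obtain \<delta> :: "real \<Rightarrow> complex" where \<delta>: "filterlim \<delta> (at s) (at_left 1)"
    and lim_\<delta>: "filterlim (f \<circ> \<delta>) at_infinity (at_left 1)"
    using assms(2) filterlim_at_of_path unfolding asymptotic_value_inf_def by blast
  assume "not_essential f s"
  then consider b where "(f \<longlongrightarrow> b) (at s)" | "is_pole f s"
    unfolding not_essential_def by blast
  then show False
  proof cases
    case (1 b)
    then have "((f \<circ> \<delta>) \<longlongrightarrow> b) (at_left 1)"
      unfolding comp_def by (rule filterlim_compose[OF _ \<delta>])
    then show False
      using not_tendsto_and_filterlim_at_infinity[OF trivial_limit_at_left_real _ lim_\<delta>] by blast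
  next
    case 2
    then have "filterlim (f \<circ> \<gamma>) at_infinity (at_left 1)"
      unfolding is_pole_def comp_def by (rule filterlim_compose[OF _ \<gamma>])
    then show False
      using not_tendsto_and_filterlim_at_infinity[OF trivial_limit_at_left_real lim_\<gamma>] by blast
  qed
qed

lemma exp_constant_imp_constant_on:
  fixes v :: "'a::topological_space \<Rightarrow> complex"
  assumes "connected S" and "continuous_on S v" and "\<And>y. y \<in> S \<Longrightarrow> exp (v y) = L"
  shows "v constant_on S"
proof (rule continuous_discrete_range_constant[OF assms(1,2)])
  fix x assume x: "x \<in> S"
  show "\<exists>e>0. \<forall>y. y \<in> S \<and> v y \<noteq> v x \<longrightarrow> e \<le> norm (v y - v x)"
  proof (intro exI[of _ "2 * pi"] conjI allI impI)
    fix y assume y: "y \<in> S \<and> v y \<noteq> v x"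
    then have "exp (v y) = exp (v x)" using assms(3) x by simp
    then obtain n :: int where n: "v y = v x + of_int (2 * n) * pi * \<i>"
      using exp_eq by blast
    with y have "1 \<le> \<bar>real_of_int n\<bar>" by auto
    then show "2 * pi \<le> norm (v y - v x)"
      using n by (simp add: norm_mult)
  qed simp
qed

text \<open>Near \<open>b\<close>, \<open>exp u / L\<close> stays in \<open>ball 1 1\<close> where \<open>Ln\<close> is continuous, so \<open>u - Ln (exp u / L)\<close>
  is continuous with values in the discrete set \<open>Ln L + 2 \<pi> i \<int>\<close>, hence constant.\<close>
lemma continuous_exp_tendsto_nonzero_imp_convergent:
  fixes u :: "real \<Rightarrow> complex"
  assumes "continuous_on {a<..<b} u" and "a < b"
    and lim: "((\<lambda>t. exp (u t)) \<longlongrightarrow> L) (at_left b)" and "L \<noteq> 0"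
  shows "\<exists>v. (u \<longlongrightarrow> v) (at_left b)"
proof -
  have "((\<lambda>t. exp (u t) / L) \<longlongrightarrow> 1) (at_left b)"
    using tendsto_divide[OF lim tendsto_const \<open>L \<noteq> 0\<close>] \<open>L \<noteq> 0\<close> by simp
  then have "eventually (\<lambda>t. exp (u t) / L \<in> ball 1 1) (at_left b)"
    by (rule topological_tendstoD) auto
  with eventually_at_left_real[OF \<open>a < b\<close>]
  have "eventually (\<lambda>t. t \<in> {a<..<b} \<and> exp (u t) / L \<in> ball 1 1) (at_left b)"
    by (rule eventually_conj)
  then obtain b' where "b' < b"
    and b': "\<And>t. b' < t \<Longrightarrow> t < b \<Longrightarrow> t \<in> {a<..<b} \<and> exp (u t) / L \<in> ball 1 1"
    unfolding eventually_at_left_field by blast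
  have not_nonpos: "exp (u t) / L \<notin> \<real>\<^sub>\<le>\<^sub>0" if "t \<in> {b'<..<b}" for t
  proof -
    have "\<bar>Re (1 - exp (u t) / L)\<bar> < 1"
      using b'[of t] that abs_Re_le_cmod[of "1 - exp (u t) / L"] by (auto simp: dist_norm)
    then show ?thesis by (simp add: complex_nonpos_Reals_iff)
  qed
  define v where "v t = u t - Ln (exp (u t) / L)" for t
  have "{b'<..<b} \<subseteq> {a<..<b}"
    using b' by auto
  with assms(1) have "continuous_on {b'<..<b} u"
    by (rule continuous_on_subset)
  then have "continuous_on {b'<..<b} v"
    unfolding v_def using not_nonpos \<open>L \<noteq> 0\<close> by (intro continuous_intros) auto
  moreover have "exp (v t) = L" for t
    using \<open>L \<noteq> 0\<close> by (simp add: v_def exp_diff)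
  ultimately have "v constant_on {b'<..<b}"
    by (intro exp_constant_imp_constant_on) auto
  then obtain v\<^sub>0 where v\<^sub>0: "\<And>t. t \<in> {b'<..<b} \<Longrightarrow> v t = v\<^sub>0"
    unfolding constant_on_def by blast
  have "eventually (\<lambda>t. v\<^sub>0 + Ln (exp (u t) / L) = u t) (at_left b)"
    using eventually_at_left_real[OF \<open>b' < b\<close>] by eventually_elim (use v\<^sub>0 v_def in force)
  moreover have "((\<lambda>t. v\<^sub>0 + Ln (exp (u t) / L)) \<longlongrightarrow> v\<^sub>0 + Ln (L / L)) (at_left b)"
    using \<open>L \<noteq> 0\<close> by (intro tendsto_intros lim) auto
  ultimately have "(u \<longlongrightarrow> v\<^sub>0) (at_left b)"
    using \<open>L \<noteq> 0\<close> by (simp add: tendsto_cong)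
  then show ?thesis ..
qed

lemma radial_path:
  fixes B v :: complex
  assumes "v \<noteq> 0"
  shows "continuous_on {0..<1} (\<lambda>t. B + of_real (1 - t) * v)"
    and "(\<lambda>t. B + of_real (1 - t) * v) ` {0..<1} \<subseteq> - {B}"
    and "((\<lambda>t. B + of_real (1 - t) * v) \<longlongrightarrow> B) (at_left 1)"
proof -
  show "continuous_on {0..<1} (\<lambda>t. B + of_real (1 - t) * v)"
    by (intro continuous_intros)
  show "(\<lambda>t. B + of_real (1 - t) * v) ` {0..<1} \<subseteq> - {B}"
    using assms by auto
  have "((\<lambda>t. B + of_real (1 - t) * v) \<longlongrightarrow> B + of_real (1 - 1) * v) (at_left 1)"
    by (intro tendsto_intros)
  then show "((\<lambda>t. B + of_real (1 - t) * v) \<longlongrightarrow> B) (at_left 1)"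
    by simp
qed

locale exp_pole_map =
  fixes f :: "complex \<Rightarrow> complex" and c K B :: complex
  assumes f_eq: "\<And>w. w \<noteq> B \<Longrightarrow> f w = c * w * exp (K / (w - B))"
    and c_nonzero: "c \<noteq> 0" and K_nonzero: "K \<noteq> 0" and B_nonzero: "B \<noteq> 0"
begin

lemma holomorphic: "f holomorphic_on - {B}"
proof (rule holomorphic_transform)
  show "(\<lambda>w. c * w * exp (K / (w - B))) holomorphic_on - {B}"
    by (intro holomorphic_intros) auto
qed (simp add: f_eq)

lemma isolated_singularity: "isolated_singularity_at f B"
  using holomorphic
  by (intro isolated_singularity_at_holomorphic[of _ UNIV]) (auto simp: Compl_eq_Diff_UNIV)

lemma f_on_radial_path:
  assumes "t < 1" and "e \<noteq> 0"
  shows "f (B + of_real (1 - t) * (of_real e * K))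
    = c * (B + of_real (1 - t) * (of_real e * K)) * of_real (exp (1 / (e * (1 - t))))"
proof -
  define w where "w = B + of_real (1 - t) * (of_real e * K)"
  have "w \<noteq> B"
    using assms K_nonzero by (simp add: w_def)
  then have "f w = c * w * exp (K / (w - B))"
    by (rule f_eq)
  moreover have "K / (w - B) = of_real (1 / (e * (1 - t)))"
    using assms K_nonzero by (simp add: w_def field_simps)
  ultimately show ?thesis
    unfolding w_def[symmetric] by (simp only: exp_of_real)
qed

lemma asymptotic_value_zero: "asymptotic_value f B 0"
proof -
  define \<gamma> where "\<gamma> = (\<lambda>t. B + of_real (1 - t) * (of_real (- 1) * K))"
  note path = radial_path[of "of_real (- 1) * K" B, folded \<gamma>_def]
  have "((\<lambda>t. c * \<gamma> t * of_real (exp (1 / (- 1 * (1 - t))))) \<longlongrightarrow> c * B * of_real 0) (at_left 1)"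
    using K_nonzero by (intro tendsto_intros path tendsto_of_real) (simp, real_asymp)
  moreover have "eventually (\<lambda>t. c * \<gamma> t * of_real (exp (1 / (- 1 * (1 - t)))) = f (\<gamma> t)) (at_left 1)"
    using eventually_at_left_real[OF zero_less_one]
    by eventually_elim (use f_on_radial_path[of _ "- 1"] in \<open>simp add: \<gamma>_def\<close>)
  ultimately have "((f \<circ> \<gamma>) \<longlongrightarrow> 0) (at_left 1)"
    by (simp add: tendsto_cong comp_def)
  with path show ?thesis
    using K_nonzero unfolding asymptotic_value_def by (intro exI[of _ \<gamma>] conjI) auto
qed

lemma asymptotic_value_infinity: "asymptotic_value_inf f B"
proof -
  define \<gamma> where "\<gamma> = (\<lambda>t. B + of_real (1 - t) * (of_real 1 * K))"
  note path = radial_path[of "of_real 1 * K" B, folded \<gamma>_def]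
  have "filterlim (\<lambda>t. of_real (exp (1 / (1 * (1 - t)))) :: complex) at_infinity (at_left 1)"
    unfolding filterlim_at_infinity_conv_norm_at_top norm_of_real by simp real_asymp
  then have "filterlim (\<lambda>t. c * \<gamma> t * of_real (exp (1 / (1 * (1 - t))))) at_infinity (at_left 1)"
    using c_nonzero B_nonzero K_nonzero
    by (intro tendsto_mult_filterlim_at_infinity[of _ "c * B"] tendsto_intros path) auto
  moreover have "eventually (\<lambda>t. c * \<gamma> t * of_real (exp (1 / (1 * (1 - t)))) = f (\<gamma> t)) (at_left 1)"
    using eventually_at_left_real[OF zero_less_one]
    by eventually_elim (use f_on_radial_path[of _ 1] in \<open>simp add: \<gamma>_def\<close>)
  ultimately have "filterlim (f \<circ> \<gamma>) at_infinity (at_left 1)"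
    unfolding comp_def by (rule filterlim_cong[OF refl refl, THEN iffD1, rotated])
  with path show ?thesis
    using K_nonzero unfolding asymptotic_value_inf_def by (intro exI[of _ \<gamma>] conjI) auto
qed

lemma essential_singularity: "\<not> not_essential f B"
  using asymptotic_value_zero asymptotic_value_infinity by (rule essential_singularity_if_asymptotic_values)

lemma asymptotic_value_eq_zero:
  assumes "asymptotic_value f B a"
  shows "a = 0"
proof (rule ccontr)
  assume "a \<noteq> 0"
  obtain \<gamma> :: "real \<Rightarrow> complex" where cont: "continuous_on {0..<1} \<gamma>"
    and avoids: "\<gamma> ` {0..<1} \<subseteq> - {B}" and lim_\<gamma>: "(\<gamma> \<longlongrightarrow> B) (at_left 1)"
    and lim_f: "((f \<circ> \<gamma>) \<longlongrightarrow> a) (at_left 1)"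
    using assms unfolding asymptotic_value_def by blast
  define u where "u t = K / (\<gamma> t - B)" for t
  have "((\<lambda>t. f (\<gamma> t) / (c * \<gamma> t)) \<longlongrightarrow> a / (c * B)) (at_left 1)"
    using lim_f lim_\<gamma> c_nonzero B_nonzero unfolding comp_def by (intro tendsto_intros) auto
  moreover have "eventually (\<lambda>t. f (\<gamma> t) / (c * \<gamma> t) = exp (u t)) (at_left 1)"
    using eventually_at_left_real[OF zero_less_one] tendsto_imp_eventually_ne[OF lim_\<gamma> B_nonzero]
  proof eventually_elim
    case (elim t)
    then have "\<gamma> t \<noteq> B" using avoids by auto
    then show ?case using elim c_nonzero by (simp add: f_eq u_def)
  qed
  ultimately have lim_exp: "((\<lambda>t. exp (u t)) \<longlongrightarrow> a / (c * B)) (at_left 1)"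
    by (simp add: tendsto_cong)
  have cont_u: "continuous_on {0<..<1} u"
  proof -
    have "continuous_on {0<..<1} \<gamma>"
      using cont by (rule continuous_on_subset) auto
    then show ?thesis
      using avoids unfolding u_def by (intro continuous_intros) auto
  qed
  then obtain v where "(u \<longlongrightarrow> v) (at_left 1)"
    using continuous_exp_tendsto_nonzero_imp_convergent[OF cont_u zero_less_one lim_exp]
      \<open>a \<noteq> 0\<close> c_nonzero B_nonzero by auto
  moreover have "filterlim u at_infinity (at_left 1)"
  proof -
    have "filterlim (\<lambda>t. \<gamma> t - B) (at 0) (at_left 1)"
      unfolding filterlim_at
    proof
      show "eventually (\<lambda>t. \<gamma> t - B \<in> UNIV \<and> \<gamma> t - B \<noteq> 0) (at_left 1)"
        using eventually_at_left_real[OF zero_less_one] by eventually_elim (use avoids in auto)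
      show "((\<lambda>t. \<gamma> t - B) \<longlongrightarrow> 0) (at_left 1)"
        using tendsto_diff[OF lim_\<gamma> tendsto_const[of B]] by simp
    qed
    then have "filterlim (\<lambda>t. inverse (\<gamma> t - B)) at_infinity (at_left 1)"
      by (rule filterlim_compose[OF filterlim_inverse_at_infinity])
    then show ?thesis
      unfolding u_def divide_inverse
      by (rule tendsto_mult_filterlim_at_infinity[OF tendsto_const K_nonzero])
  qed
  ultimately show False
    using not_tendsto_and_filterlim_at_infinity[OF trivial_limit_at_left_real] by blast
qed

lemma filterlim_at_infinity: "filterlim f at_infinity at_infinity"
proof -
  have "filterlim (\<lambda>w. - B + w) at_infinity at_infinity"
    by (rule tendsto_add_filterlim_at_infinity[OF tendsto_const filterlim_ident])
  then have "((\<lambda>w. K / (w - B)) \<longlongrightarrow> 0) at_infinity"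
    by (intro tendsto_divide_0[OF tendsto_const]) simp
  then have "((\<lambda>w. c * exp (K / (w - B))) \<longlongrightarrow> c * exp 0) at_infinity"
    by (intro tendsto_intros)
  then have "filterlim (\<lambda>w. c * exp (K / (w - B)) * w) at_infinity at_infinity"
    using c_nonzero by (intro tendsto_mult_filterlim_at_infinity[OF _ _ filterlim_ident]) auto
  moreover have "eventually (\<lambda>w. c * exp (K / (w - B)) * w = f w) at_infinity"
    unfolding eventually_at_infinity
  proof (intro exI[of _ "norm B + 1"] allI impI)
    fix w :: complex
    assume "norm B + 1 \<le> norm w"
    then have "w \<noteq> B"
      by auto
    then show "c * exp (K / (w - B)) * w = f w"
      by (simp add: f_eq mult_ac)
  qed
  ultimately show ?thesis
    by (rule filterlim_cong[OF refl refl, THEN iffD1, rotated])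
qed

lemma not_essential_at_infinity: "not_essential (\<lambda>z. f (inverse z)) 0"
  unfolding not_essential_def is_pole_def
  using filterlim_compose[OF filterlim_at_infinity filterlim_inverse_at_infinity] by blast

lemma chart_inf_has_field_derivative: "(chart_inf f has_field_derivative inverse c) (at 0)"
proof -
  define h where "h z = inverse c * z * exp (- (K * z / (1 - B * z)))" for z
  have "((\<lambda>z. K * z / (1 - B * z)) has_field_derivative
      (K * (1 - B * 0) - K * 0 * (0 - B * 1)) / ((1 - B * 0) * (1 - B * 0))) (at 0)"
    by (intro DERIV_divide DERIV_cmult DERIV_ident DERIV_diff DERIV_const) simp_all
  then have "((\<lambda>z. K * z / (1 - B * z)) has_field_derivative K) (at 0)"
    by simp
  from DERIV_mult[OF DERIV_cmult[OF DERIV_ident] DERIV_exp[THEN DERIV_chain2, OF DERIV_minus[OF this]]]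
  have h_deriv: "(h has_field_derivative inverse c) (at 0)"
    unfolding h_def by simp
  have h_eq: "h z = chart_inf f z" if "z \<in> ball 0 (inverse (norm B))" for z
  proof (cases "z = 0")
    case False
    have "norm (B * z) < 1"
      using that B_nonzero by (simp add: norm_mult field_simps)
    then have "1 - B * z \<noteq> 0"
      by auto
    have "inverse z - B = (1 - B * z) / z"
      using False by (simp add: field_simps)
    with \<open>1 - B * z \<noteq> 0\<close> False
    have "inverse z \<noteq> B" and exponent: "K / (inverse z - B) = K * z / (1 - B * z)"
      by auto
    have "chart_inf f z = inverse (f (inverse z))"
      using False by (simp add: chart_inf_def)
    also have "\<dots> = inverse (c * inverse z * exp (K * z / (1 - B * z)))"
      by (simp only: f_eq[OF \<open>inverse z \<noteq> B\<close>] exponent)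
    also have "\<dots> = h z"
      by (simp only: h_def inverse_mult_distrib inverse_inverse_eq exp_minus)
    finally show ?thesis ..
  qed (simp add: h_def chart_inf_def)
  have "open (ball (0::complex) (inverse (norm B)))" and "0 \<in> ball (0::complex) (inverse (norm B))"
    using B_nonzero by simp_all
  from h_deriv this h_eq show ?thesis
    by (rule has_field_derivative_transform_within_open)
qed

end

lemma exp_2pi_i_eq_1_iff: "exp (2 * pi * \<i> * z) = 1 \<longleftrightarrow> (\<exists>n::int. z = of_int n)"
proof -
  have "exp (2 * pi * \<i> * z) = exp 0 \<longleftrightarrow> (\<exists>n::int. 2 * pi * \<i> * z = 0 + of_int (2 * n) * pi * \<i>)"
    by (rule exp_eq)
  also have "\<dots> \<longleftrightarrow> (\<exists>n::int. z = of_int n)"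
    by (simp add: algebra_simps)
  finally show ?thesis by simp
qed

context
  fixes l :: complex
  assumes l_ne: "l \<noteq> pi * \<i>" and l_ne_neg: "l \<noteq> - pi * \<i>"
begin

lemma plus_pi_i_nonzero: "l + pi * \<i> \<noteq> 0"
  using l_ne_neg by (simp add: add_eq_0_iff2)

lemma minus_pi_i_nonzero: "l - pi * \<i> \<noteq> 0"
  using l_ne by simp

lemma B_lam_nonzero: "B_lam l \<noteq> 0"
  using plus_pi_i_nonzero minus_pi_i_nonzero by (simp add: B_lam_def)

lemma M_lam_denominator_nonzero: "w \<noteq> B_lam l \<Longrightarrow> (l + pi * \<i>) * w - (l - pi * \<i>) \<noteq> 0"
  using plus_pi_i_nonzero by (auto simp: B_lam_def field_simps)

lemma M_lam_partial_fractions: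
  assumes "w \<noteq> B_lam l"
  shows "M_lam l w = - 1 / (l + pi * \<i>) + 2 * pi * \<i> / ((l + pi * \<i>)\<^sup>2 * (w - B_lam l))"
proof -
  define a b where "a = l + pi * \<i>" and "b = l - pi * \<i>"
  have "a \<noteq> 0" and "a * w - b \<noteq> 0"
    using plus_pi_i_nonzero M_lam_denominator_nonzero[OF assms] by (simp_all add: a_def b_def)
  then have "- (w - 1) / (a * w - b) = - 1 / a + (a - b) / (a * (a * w - b))"
    by (simp add: divide_simps) (simp add: algebra_simps)
  moreover have "a * (a * w - b) = a\<^sup>2 * (w - b / a)"
    using \<open>a \<noteq> 0\<close> by (simp add: field_simps power2_eq_square)
  moreover have "a - b = 2 * pi * \<i>"
    by (simp add: a_def b_def)
  ultimately show ?thesis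
    by (simp add: M_lam_def B_lam_def a_def[symmetric] b_def[symmetric])
qed

lemma g_lam_exp_pole_map:
  "exp_pole_map (g_lam l) (exp (- 2 * pi * \<i> / (l + pi * \<i>))) (- 4 * pi\<^sup>2 / (l + pi * \<i>)\<^sup>2) (B_lam l)"
proof
  fix w assume "w \<noteq> B_lam l"
  then have "2 * pi * \<i> * M_lam l w
      = - 2 * pi * \<i> / (l + pi * \<i>) + (- 4 * pi\<^sup>2 / (l + pi * \<i>)\<^sup>2) / (w - B_lam l)"
    by (simp add: M_lam_partial_fractions field_simps power2_eq_square)
  then show "g_lam l w
      = exp (- 2 * pi * \<i> / (l + pi * \<i>)) * w * exp ((- 4 * pi\<^sup>2 / (l + pi * \<i>)\<^sup>2) / (w - B_lam l))"
    by (simp add: g_lam_def exp_add[symmetric] mult_ac)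
qed (use plus_pi_i_nonzero B_lam_nonzero in simp_all)

interpretation g_lam: exp_pole_map "g_lam l" "exp (- 2 * pi * \<i> / (l + pi * \<i>))"
    "- 4 * pi\<^sup>2 / (l + pi * \<i>)\<^sup>2" "B_lam l"
  by (fact g_lam_exp_pole_map)

lemma M_lam_has_field_derivative:
  fixes w :: complex
  assumes "w \<noteq> B_lam l"
  shows "(M_lam l has_field_derivative - 2 * pi * \<i> / ((l + pi * \<i>) * w - (l - pi * \<i>))\<^sup>2) (at w)"
proof -
  note D = M_lam_denominator_nonzero[OF assms]
  have deriv: "(M_lam l has_field_derivative
      (- ((l + pi * \<i>) * w - (l - pi * \<i>)) + (w - 1) * (l + pi * \<i>)) / ((l + pi * \<i>) * w - (l - pi * \<i>))\<^sup>2) (at w)"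
    unfolding M_lam_def[abs_def]
    by (rule derivative_eq_intros refl D | simp)+ (simp add: power2_eq_square field_simps D)
  have numerator: "- ((l + pi * \<i>) * w - (l - pi * \<i>)) + (w - 1) * (l + pi * \<i>) = - 2 * pi * \<i>"
    by (simp add: algebra_simps)
  from deriv show ?thesis
    unfolding numerator .
qed

lemma g_lam_has_field_derivative:
  fixes w :: complex
  assumes "w \<noteq> B_lam l"
  shows "(g_lam l has_field_derivative
    exp (2 * pi * \<i> * M_lam l w) * (1 + 4 * pi\<^sup>2 * w / ((l + pi * \<i>) * w - (l - pi * \<i>))\<^sup>2)) (at w)"
proof -
  let ?E = "exp (2 * pi * \<i> * M_lam l w)" and ?D = "(l + pi * \<i>) * w - (l - pi * \<i>)"
  have deriv: "(g_lam l has_field_derivative 1 * ?E + ?E * (2 * pi * \<i> * (- 2 * pi * \<i> / ?D\<^sup>2)) * w) (at w)"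
    unfolding g_lam_def[abs_def]
    by (rule DERIV_mult[OF DERIV_ident DERIV_chain2[OF DERIV_exp DERIV_cmult[OF M_lam_has_field_derivative[OF assms]]]])
  have "1 * ?E + ?E * (2 * pi * \<i> * (- 2 * pi * \<i> / ?D\<^sup>2)) * w = ?E * (1 + 4 * pi\<^sup>2 * w / ?D\<^sup>2)"
    by (simp add: field_simps power2_eq_square)
  with deriv show ?thesis
    by simp
qed

lemma M_lam_eq_of_int_iff:
  fixes w :: complex
  assumes "w \<noteq> B_lam l"
  shows "M_lam l w = of_int s \<longleftrightarrow> 1 + (l + pi * \<i>) * of_int s \<noteq> 0 \<and> w = wstar l s"
proof -
  let ?p = "1 + (l + pi * \<i>) * of_int s" and ?q = "1 + (l - pi * \<i>) * of_int s"
  have "M_lam l w = of_int s \<longleftrightarrow> w * ?p = ?q"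
    using M_lam_denominator_nonzero[OF assms] by (auto simp: M_lam_def field_simps)
  moreover have "?p \<noteq> 0" if "w * ?p = ?q"
  proof
    assume "?p = 0"
    with that have "?p - ?q = 0" by simp
    then have "s = 0" by (simp add: algebra_simps)
    with \<open>?p = 0\<close> show False by simp
  qed
  ultimately show ?thesis
    by (auto simp: wstar_def eq_divide_eq)
qed

lemma wstar_ne_B_lam:
  assumes "1 + (l + pi * \<i>) * of_int s \<noteq> 0"
  shows "wstar l s \<noteq> B_lam l"
proof
  assume "wstar l s = B_lam l"
  then have "(l + pi * \<i>) * (1 + (l - pi * \<i>) * of_int s) = (l - pi * \<i>) * (1 + (l + pi * \<i>) * of_int s)"
    using assms plus_pi_i_nonzero by (simp add: wstar_def B_lam_def field_simps)
  then show False
    by (simp add: algebra_simps)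
qed

lemma g_lam_fixed_points:
  "{w. w \<noteq> B_lam l \<and> g_lam l w = w} = {0} \<union> {wstar l s | s. 1 + (l + pi * \<i>) * of_int s \<noteq> 0}"
proof -
  have "g_lam l w = w \<longleftrightarrow> w = 0 \<or> (\<exists>n::int. M_lam l w = of_int n)" for w
    using exp_2pi_i_eq_1_iff[of "M_lam l w"] by (auto simp: g_lam_def)
  then show ?thesis
    using B_lam_nonzero wstar_ne_B_lam by (auto simp: M_lam_eq_of_int_iff)
qed

lemma g_lam_multiplier_0: "(g_lam l has_field_derivative exp (2 * pi * \<i> / (pi * \<i> - l))) (at 0)"
proof -
  have "M_lam l 0 = 1 / (pi * \<i> - l)"
    using minus_pi_i_nonzero by (simp add: M_lam_def field_simps)
  with g_lam_has_field_derivative[of 0] B_lam_nonzero show ?thesis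
    by simp
qed

lemma g_lam_multiplier_wstar:
  assumes "1 + (l + pi * \<i>) * of_int s \<noteq> 0"
  shows "(g_lam l has_field_derivative
    1 - (1 + (l - pi * \<i>) * of_int s) * (1 + (l + pi * \<i>) * of_int s)) (at (wstar l s))"
proof -
  let ?p = "1 + (l + pi * \<i>) * of_int s" and ?q = "1 + (l - pi * \<i>) * of_int s"
  have "exp (2 * pi * \<i> * M_lam l (wstar l s)) = 1"
    using assms wstar_ne_B_lam M_lam_eq_of_int_iff exp_2pi_i_eq_1_iff by blast
  moreover have "1 + 4 * pi\<^sup>2 * wstar l s / ((l + pi * \<i>) * wstar l s - (l - pi * \<i>))\<^sup>2 = 1 - ?q * ?p"
  proof -
    define w where "w = wstar l s"
    have prod: "w * ?p = ?q"
      using assms by (simp add: w_def wstar_def)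
    have den: "(l + pi * \<i>) * w - (l - pi * \<i>) = 2 * pi * \<i> / ?p"
      using assms by (simp add: w_def wstar_def field_simps)
    have "4 * pi\<^sup>2 * w / ((l + pi * \<i>) * w - (l - pi * \<i>))\<^sup>2 = - (w * ?p) * ?p"
      using assms unfolding den by (simp add: power_divide power_mult_distrib field_simps power2_eq_square)
    with prod show ?thesis
      by (simp add: w_def) (simp add: algebra_simps)
  qed
  ultimately show ?thesis
    using g_lam_has_field_derivative[OF wstar_ne_B_lam[OF assms]] by simp
qed

lemma B_lam_ne_1: "B_lam l \<noteq> 1"
  using plus_pi_i_nonzero by (simp add: B_lam_def)

lemma deriv_g_lam_eq_0_iff:
  assumes "w \<noteq> B_lam l"
  shows "deriv (g_lam l) w = 0 \<longleftrightarrow> w = 1 \<or> w = (B_lam l)\<^sup>2"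
proof -
  let ?a = "l + pi * \<i>" and ?b = "l - pi * \<i>"
  have "deriv (g_lam l) w = 0 \<longleftrightarrow> 1 + 4 * pi\<^sup>2 * w / (?a * w - ?b)\<^sup>2 = 0"
    by (simp add: DERIV_imp_deriv[OF g_lam_has_field_derivative[OF assms]])
  also have "\<dots> \<longleftrightarrow> (?a * w - ?b)\<^sup>2 + 4 * pi\<^sup>2 * w = 0"
    using M_lam_denominator_nonzero[OF assms] by (simp add: field_simps)
  also have "(?a * w - ?b)\<^sup>2 + 4 * pi\<^sup>2 * w = (?a\<^sup>2 * w - ?b\<^sup>2) * (w - 1)"
    by (simp add: power2_eq_square algebra_simps)
  also have "\<dots> = 0 \<longleftrightarrow> ?a\<^sup>2 * w - ?b\<^sup>2 = 0 \<or> w = 1"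
    by simp
  also have "?a\<^sup>2 * w - ?b\<^sup>2 = 0 \<longleftrightarrow> w = (B_lam l)\<^sup>2"
    using plus_pi_i_nonzero by (simp add: B_lam_def power_divide eq_divide_eq right_minus_eq mult.commute)
  finally show ?thesis
    by blast
qed

lemma g_lam_critical_points: "{w. w \<noteq> B_lam l \<and> deriv (g_lam l) w = 0} = {wstar l 0, (B_lam l)\<^sup>2}"
proof -
  have "wstar l 0 = 1"
    by (simp add: wstar_def)
  moreover have "(B_lam l)\<^sup>2 \<noteq> B_lam l"
    using B_lam_nonzero B_lam_ne_1 by (simp add: power2_eq_square)
  ultimately show ?thesis
    using B_lam_ne_1 by (auto simp: deriv_g_lam_eq_0_iff)
qed

lemma g_lam_singular_values:
  "singular_values_fin (g_lam l) (- {B_lam l}) (B_lam l) = {0, wstar l 0, g_lam l ((B_lam l)\<^sup>2)}"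
proof -
  have "critical_values (g_lam l) (- {B_lam l}) = g_lam l ` {w. w \<noteq> B_lam l \<and> deriv (g_lam l) w = 0}"
    unfolding critical_values_def by auto
  also have "\<dots> = {wstar l 0, g_lam l ((B_lam l)\<^sup>2)}"
    unfolding g_lam_critical_points by (simp add: wstar_def g_lam_def M_lam_def)
  finally have "critical_values (g_lam l) (- {B_lam l}) \<union> {a. asymptotic_value (g_lam l) (B_lam l) a}
      = {0, wstar l 0, g_lam l ((B_lam l)\<^sup>2)}"
    using g_lam.asymptotic_value_zero g_lam.asymptotic_value_eq_zero by auto
  then show ?thesis
    unfolding singular_values_fin_def by (simp add: closure_closed finite_imp_closed)
qed

end

theorem lemma5p5:
  fixes l :: complex
  assumes "l \<noteq> pi * \<i>" and "l \<noteq> - pi * \<i>"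
  shows
    "g_lam l holomorphic_on (- {B_lam l}) \<and>
     isolated_singularity_at (g_lam l) (B_lam l) \<and>
     \<not> not_essential (g_lam l) (B_lam l) \<and>
     filterlim (g_lam l) at_infinity at_infinity \<and>
     not_essential (\<lambda>z. g_lam l (inverse z)) 0 \<and>
     {w. w \<noteq> B_lam l \<and> g_lam l w = w} =
        {0} \<union> {wstar l s | s. 1 + (l + pi * \<i>) * of_int s \<noteq> 0} \<and>
     (g_lam l has_field_derivative exp (2 * pi * \<i> / (pi * \<i> - l))) (at 0) \<and>
     (chart_inf (g_lam l) has_field_derivative exp (2 * pi * \<i> / (pi * \<i> + l))) (at 0) \<and>
     (\<forall>s::int. 1 + (l + pi * \<i>) * of_int s \<noteq> 0 \<longrightarrow>
        (g_lam l has_field_derivative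
           (1 - (1 + (l - pi * \<i>) * of_int s) * (1 + (l + pi * \<i>) * of_int s))) (at (wstar l s))) \<and>
     {w. w \<noteq> B_lam l \<and> deriv (g_lam l) w = 0} = {wstar l 0, (B_lam l)\<^sup>2} \<and>
     asymptotic_value (g_lam l) (B_lam l) 0 \<and>
     asymptotic_value_inf (g_lam l) (B_lam l) \<and>
     singular_values_fin (g_lam l) (- {B_lam l}) (B_lam l) = {0, wstar l 0, g_lam l ((B_lam l)\<^sup>2)} \<and>
     infinity_singular (g_lam l) (- {B_lam l}) (B_lam l)"
proof -
  interpret g: exp_pole_map "g_lam l" "exp (- 2 * pi * \<i> / (l + pi * \<i>))"
      "- 4 * pi\<^sup>2 / (l + pi * \<i>)\<^sup>2" "B_lam l"
    using assms by (rule g_lam_exp_pole_map)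
  have "inverse (exp (- 2 * pi * \<i> / (l + pi * \<i>))) = exp (2 * pi * \<i> / (pi * \<i> + l))"
    by (simp add: exp_minus[symmetric] add.commute)
  then have "(chart_inf (g_lam l) has_field_derivative exp (2 * pi * \<i> / (pi * \<i> + l))) (at 0)"
    using g.chart_inf_has_field_derivative by simp
  moreover have "infinity_singular (g_lam l) (- {B_lam l}) (B_lam l)"
    unfolding infinity_singular_def using g.asymptotic_value_infinity by blast
  ultimately show ?thesis
    using g.holomorphic g.isolated_singularity g.essential_singularity g.filterlim_at_infinity
      g.not_essential_at_infinity g_lam_fixed_points[OF assms] g_lam_multiplier_0[OF assms]
      g_lam_multiplier_wstar[OF assms] g_lam_critical_points[OF assms] g.asymptotic_value_zero
      g.asymptotic_value_infinity g_lam_singular_values[OF assms]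
    by blast
qed

end
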